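(* Let $r\ge 3$ and $0<l<r-1$, and let $d_1,\dots,d_{l-1},d_{l+2},\dots,d_{r-1}\in\{0,1\}$. Then \[ C^{(d_1,\dots,d_{l-1},0,1,d_{l+2},\dots,d_{r-1})}=C^{(d_1,\dots,d_{l-1})}\cdot C^{(1,d_{l+2},\dots,d_{r-1})}. \] Here the left side is a coefficient attached to $\mathbb Z_{\ge0}^r$ (with $r-1$ indices), the first factor to $\mathbb Z_{\ge0}^{l}$ (with $l-1$ indices) and the second to $\mathbb Z_{\ge0}^{r-l}$ (with $r-l-1$ indices).
   Context: Bernoulli numbers $B_n$ are defined by $\sum_{n\ge0}B_n x^n/n! = xe^x/(e^x-1)$ (so $B_1=+1/2$). For $r\ge1$ and a finite set $S\subset\mathbb Z_{\ge0}^r$, put $C(S)=(-1)^r\sum_{(n_1,\dots,n_r)\in S}\prod_{j=1}^r \frac{B_{n_j}}{n_j!}$. For $r\ge1$, $1\le j\le r-1$ define $S^{(0)}_{j,r}=\{(n_1,\dots,n_r)\in\mathbb Z_{\ge0}^r: n_1+\dots+n_r=r,\ n_{j+1}+\dots+n_r\le r-j\}$ and $S^{(1)}_{j,r}=\{(n_1,\dots,n_r)\in\mathbb Z_{\ge0}^r: n_1+\dots+n_r=r,\ n_1+\dots+n_j<j\}$. For $d_1,\dots,d_{r-1}\in\{0,1\}$ let $S^{(d_1,\dots,d_{r-1})}=\bigcap_{j=1}^{r-1}S^{(d_j)}_{j,r}$ (for $r=1$ this is $S^{()}=\{(1)\}\subset\mathbb Z_{\ge0}^1$), and $C^{(d_1,\dots,d_{r-1})}=C(S^{(d_1,\dots,d_{r-1})})$.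 In particular $C^{()}=-1/2$. *)

theory Defs
  imports Complex_Main "HOL-Computational_Algebra.Formal_Power_Series"
begin

text \<open>Bernoulli numbers with B_1 = +1/2: the coefficients of the exponential
generating function x e^x / (e^x - 1).\<close>
definition bernoulli_plus :: "nat \<Rightarrow> real" where
  "bernoulli_plus n = fact n * fps_nth (fps_X * fps_exp 1 / (fps_exp 1 - 1)) n"

definition C_of :: "nat \<Rightarrow> nat list set \<Rightarrow> real" where
  "C_of r S = (-1) ^ r * (\<Sum>ns\<in>S. (\<Prod>j<r. bernoulli_plus (ns ! j) / fact (ns ! j)))"

definition S0 :: "nat \<Rightarrow> nat \<Rightarrow> nat list set" where
  "S0 j r = {ns. length ns = r \<and> sum_list ns = r \<and> sum_list (drop j ns) \<le> r - j}"

definition S1 :: "nat \<Rightarrow> nat \<Rightarrow> nat list set" where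
  "S1 j r = {ns. length ns = r \<and> sum_list ns = r \<and> sum_list (take j ns) < j}"

definition Sd :: "nat list \<Rightarrow> nat list set" where
  "Sd ds = (let r = length ds + 1 in
     {ns. length ns = r \<and> sum_list ns = r} \<inter>
     (\<Inter>j\<in>{1..r-1}. if ds ! (j - 1) = 0 then S0 j r else S1 j r))"

definition Cd :: "nat list \<Rightarrow> real" where
  "Cd ds = C_of (length ds + 1) (Sd ds)"

end

theory Submission
  imports Defs
begin

text \<open>A tuple of \<open>S^{(d_1,\<dots>,d_{l-1},0,1,d_{l+2},\<dots>)}\<close> has prefix sum exactly \<open>l\<close> after \<open>l\<close>
  entries: the digit \<open>0\<close> at position \<open>l\<close> forces \<open>n_1 + \<dots> + n_l \<ge> l\<close>, the digit \<open>1\<close> at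
  position \<open>l + 1\<close> forces \<open>n_1 + \<dots> + n_{l+1} < l + 1\<close>, and then also \<open>n_{l+1} = 0\<close>.
  Given this, every defining condition of the long tuple only involves either its first
  \<open>l\<close> entries or its last \<open>r - l\<close> entries, so the index set is the concatenation of the
  index sets of the two factors, and the summand \<open>\<Prod> B_{n_j}/n_j!\<close> factors accordingly.\<close>

definition prefix_condition :: "nat \<Rightarrow> nat list \<Rightarrow> nat \<Rightarrow> bool" where
  "prefix_condition d ns j \<longleftrightarrow>
     (if d = 0 then j \<le> sum_list (take j ns) else sum_list (take j ns) < j)"

lemma mem_Sd_iff:
  "ns \<in> Sd ds \<longleftrightarrow> length ns = length ds + 1 \<and> sum_list ns = length ds + 1 \<and>
     (\<forall>j\<in>{1..length ds}. prefix_condition (ds ! (j - 1)) ns j)"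
proof -
  have suffix_prefix: "sum_list (drop j ns) \<le> length ds + 1 - j \<longleftrightarrow> j \<le> sum_list (take j ns)"
    if "sum_list ns = length ds + 1" "j \<le> length ds" for j
  proof -
    have "sum_list ns = sum_list (take j ns) + sum_list (drop j ns)"
      by (metis append_take_drop_id sum_list_append)
    with that show ?thesis by linarith
  qed
  have condition_j:
    "ns \<in> (if ds ! (j - 1) = 0 then S0 j (length ds + 1) else S1 j (length ds + 1))
       \<longleftrightarrow> prefix_condition (ds ! (j - 1)) ns j"
    if "length ns = length ds + 1" "sum_list ns = length ds + 1" "j \<in> {1..length ds}" for j
    using that suffix_prefix[of j] by (simp add: S0_def S1_def prefix_condition_def)
  have "ns \<in> Sd ds \<longleftrightarrow> length ns = length ds + 1 \<and> sum_list ns = length ds + 1 \<and>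
     (\<forall>j\<in>{1..length ds}.
        ns \<in> (if ds ! (j - 1) = 0 then S0 j (length ds + 1) else S1 j (length ds + 1)))"
    unfolding Sd_def Let_def by auto
  then show ?thesis
    using condition_j by blast
qed

lemma prefix_condition_append_left:
  "j \<le> length a \<Longrightarrow> prefix_condition d (a @ b) j \<longleftrightarrow> prefix_condition d a j"
  by (simp add: prefix_condition_def)

lemma prefix_condition_append_right:
  "sum_list a = length a \<Longrightarrow>
     prefix_condition d (a @ b) (length a + k) \<longleftrightarrow> prefix_condition d b k"
  by (simp add: prefix_condition_def)

lemma ball_atLeastAtMost_split:
  fixes P :: "nat \<Rightarrow> bool"
  shows "(\<forall>j\<in>{1..m + 1 + n}. P j) \<longleftrightarrow>
     (\<forall>j\<in>{1..m}. P j) \<and> P (m + 1) \<and> (\<forall>k\<in>{1..n}. P (m + 1 + k))"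
  (is "?lhs \<longleftrightarrow> ?rhs")
proof
  assume ?rhs
  show ?lhs
  proof
    fix j assume "j \<in> {1..m + 1 + n}"
    then consider "j \<in> {1..m}" | "j = m + 1" | "j - (m + 1) \<in> {1..n}" "j = m + 1 + (j - (m + 1))"
      by fastforce
    then show "P j" using \<open>?rhs\<close> by cases metis+
  qed
qed auto

lemma Sd_append_0_1_iff:
  assumes len_a: "length a = length ds1 + 1" and len_b: "length b = length ds2 + 2"
  shows "a @ b \<in> Sd (ds1 @ [0, 1] @ ds2) \<longleftrightarrow> a \<in> Sd ds1 \<and> b \<in> Sd (1 # ds2)"
proof -
  let ?ds = "ds1 @ [0, 1] @ ds2"
  let ?m = "length ds1"
  let ?cond = "\<lambda>j. prefix_condition (?ds ! (j - 1)) (a @ b) j"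
  have take_a_b0: "take (?m + 2) (a @ b) = a @ [b ! 0]"
    using len_a len_b by (simp add: take_Suc_conv_app_nth)
  have digits_left: "?ds ! (j - 1) = ds1 ! (j - 1)" if "j \<in> {1..?m}" for j
    using that by (auto simp: nth_append)
  have digits_right: "?ds ! (?m + 1 + k - 1) = (1 # ds2) ! (k - 1)" if "k \<ge> 1" for k
    using that by (auto simp: nth_append)
  have conditions:
    "(\<forall>j\<in>{1..length ?ds}. ?cond j) \<longleftrightarrow>
       (\<forall>j\<in>{1..?m}. prefix_condition (ds1 ! (j - 1)) a j) \<and>
       (\<forall>k\<in>{1..length (1 # ds2)}. prefix_condition ((1 # ds2) ! (k - 1)) b k)"
    if sum_a: "sum_list a = length a"
  proof -
    have "length ?ds = ?m + 1 + length (1 # ds2)" by simp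
    moreover have "?cond (?m + 1)"
      using sum_a len_a by (simp add: prefix_condition_def nth_append)
    moreover have "?cond j \<longleftrightarrow> prefix_condition (ds1 ! (j - 1)) a j" if "j \<in> {1..?m}" for j
      using that len_a digits_left[OF that] by (simp add: prefix_condition_append_left)
    moreover have "?cond (?m + 1 + k) \<longleftrightarrow> prefix_condition ((1 # ds2) ! (k - 1)) b k"
      if "k \<in> {1..length (1 # ds2)}" for k
      using that sum_a len_a prefix_condition_append_right[of a _ b k] digits_right[of k]
      by simp
    ultimately show ?thesis
      by (simp only: ball_atLeastAtMost_split) auto
  qed
  have sum_a_if_left: "sum_list a = length a" if "a @ b \<in> Sd ?ds"
  proof -
    have "\<forall>j\<in>{1..length ?ds}. ?cond j"
      using that unfolding mem_Sd_iff by blast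
    then have "?cond (?m + 1)" and "?cond (?m + 2)"
      by (rule bspec, simp)+
    then show ?thesis
      using len_a take_a_b0 by (simp add: prefix_condition_def nth_append)
  qed
  show ?thesis
  proof
    assume left: "a @ b \<in> Sd ?ds"
    then have "sum_list a = length a" by (rule sum_a_if_left)
    then show "a \<in> Sd ds1 \<and> b \<in> Sd (1 # ds2)"
      using left len_a len_b unfolding mem_Sd_iff conditions[OF \<open>sum_list a = length a\<close>]
      by simp
  next
    assume right: "a \<in> Sd ds1 \<and> b \<in> Sd (1 # ds2)"
    then have "sum_list a = length a"
      by (simp add: mem_Sd_iff len_a)
    then show "a @ b \<in> Sd ?ds"
      using right len_a len_b unfolding mem_Sd_iff conditions[OF \<open>sum_list a = length a\<close>]
      by simp
  qed
qed

lemma Sd_append_0_1: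
  "Sd (ds1 @ [0, 1] @ ds2) = (\<lambda>(a, b). a @ b) ` (Sd ds1 \<times> Sd (1 # ds2))"
proof (intro set_eqI iffI)
  fix ns assume ns: "ns \<in> Sd (ds1 @ [0, 1] @ ds2)"
  let ?a = "take (length ds1 + 1) ns" and ?b = "drop (length ds1 + 1) ns"
  have "length ?a = length ds1 + 1" "length ?b = length ds2 + 2"
    using ns by (auto simp: mem_Sd_iff)
  with ns have "?a \<in> Sd ds1" "?b \<in> Sd (1 # ds2)"
    using Sd_append_0_1_iff[of ?a ds1 ?b ds2] by simp_all
  then show "ns \<in> (\<lambda>(a, b). a @ b) ` (Sd ds1 \<times> Sd (1 # ds2))"
    by (intro image_eqI[of _ _ "(?a, ?b)"]) auto
next
  fix ns assume "ns \<in> (\<lambda>(a, b). a @ b) ` (Sd ds1 \<times> Sd (1 # ds2))"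
  then obtain a b where "ns = a @ b" "a \<in> Sd ds1" "b \<in> Sd (1 # ds2)"
    by auto
  then show "ns \<in> Sd (ds1 @ [0, 1] @ ds2)"
    using Sd_append_0_1_iff[of a ds1 b ds2] by (auto simp: mem_Sd_iff)
qed

lemma prod_lessThan_nth_eq_prod_list:
  "length ns = r \<Longrightarrow> (\<Prod>j<r. f (ns ! j)) = prod_list (map f ns)"
proof (induction ns arbitrary: r)
  case (Cons n ns)
  then show ?case by (auto simp: prod.lessThan_Suc_shift simp del: prod.lessThan_Suc)
qed simp

lemma C_of_image_append:
  assumes "\<And>a. a \<in> A \<Longrightarrow> length a = m" and "\<And>b. b \<in> B \<Longrightarrow> length b = n"
  shows "C_of (m + n) ((\<lambda>(a, b). a @ b) ` (A \<times> B)) = C_of m A * C_of n B"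
proof -
  let ?f = "\<lambda>k. bernoulli_plus k / fact k"
  have inj: "inj_on (\<lambda>(a, b). a @ b) (A \<times> B)"
    using assms(1) by (auto simp: inj_on_def)
  have prod_append: "(\<Prod>j<m + n. ?f ((a @ b) ! j)) = prod_list (map ?f a) * prod_list (map ?f b)"
    if "a \<in> A" "b \<in> B" for a b
    using that assms prod_lessThan_nth_eq_prod_list[of "a @ b" "m + n"] by simp
  have "(\<Sum>ns\<in>(\<lambda>(a, b). a @ b) ` (A \<times> B). \<Prod>j<m + n. ?f (ns ! j))
      = (\<Sum>(a, b)\<in>A \<times> B. prod_list (map ?f a) * prod_list (map ?f b))"
    by (auto simp: sum.reindex[OF inj] prod_append intro!: sum.cong)
  also have "\<dots> = (\<Sum>a\<in>A. prod_list (map ?f a)) * (\<Sum>b\<in>B. prod_list (map ?f b))"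
    by (simp add: sum_product sum.cartesian_product)
  also have "\<dots> = (\<Sum>a\<in>A. \<Prod>j<m. ?f (a ! j)) * (\<Sum>b\<in>B. \<Prod>j<n. ?f (b ! j))"
    using assms by (simp add: prod_lessThan_nth_eq_prod_list[where f = ?f] cong: sum.cong)
  finally show ?thesis
    by (simp add: C_of_def power_add algebra_simps)
qed

theorem theorem2p3:
  fixes r l :: nat and ds1 ds2 :: "nat list"
  assumes "r \<ge> 3" and "0 < l" and "l < r - 1"
    and "length ds1 = l - 1" and "length ds2 = r - l - 2"
    and "set ds1 \<subseteq> {0, 1}" and "set ds2 \<subseteq> {0, 1}"
  shows "Cd (ds1 @ [0, 1] @ ds2) = Cd ds1 * Cd (1 # ds2)"
proof -
  \<comment> \<open>The identity holds for arbitrary digit lists.\<close>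
  have "Cd (ds1 @ [0, 1] @ ds2)
      = C_of (length (ds1 @ [0, 1] @ ds2) + 1) ((\<lambda>(a, b). a @ b) ` (Sd ds1 \<times> Sd (1 # ds2)))"
    unfolding Cd_def Sd_append_0_1 ..
  also have "\<dots> = C_of ((length ds1 + 1) + (length (1 # ds2) + 1))
      ((\<lambda>(a, b). a @ b) ` (Sd ds1 \<times> Sd (1 # ds2)))"
    by simp
  also have "\<dots> = Cd ds1 * Cd (1 # ds2)"
    unfolding Cd_def by (rule C_of_image_append) (simp_all add: mem_Sd_iff)
  finally show ?thesis .
qed

end
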